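(* Let $\mathcal{R}$ be a field and $(\mathcal{C}^{\bullet},\partial)$ a bigraded cochain complex of $\mathcal{R}$-vector spaces as in the context. Then there are vector space isomorphisms \[ B^{3}(\mathcal{C},\partial)\cong(B^{3}(\mathcal{C},\partial)\cap\mathcal{C}^{3,0})\oplus(\mathcal{B}^{3}_{1}\cap\mathcal{C}^{2,1})\oplus(\mathcal{B}^{3}_{2}\cap\mathcal{C}^{1,2})\oplus B^{3}(\mathcal{C}^{0,\bullet},\partial_{0,1}), \] \[ Z^{3}(\mathcal{C},\partial)\cong Z^{3}(\mathcal{N}_{0},\overline{\partial})\oplus\ker(\varrho_{3})\oplus(\mathcal{Z}^{3}_{2}\cap\mathcal{C}^{1,2})\oplus\mathcal{Z}^{3}_{3}, \] \[ H^{3}(\mathcal{C},\partial)\cong\frac{Z^{3}(\mathcal{N}_{0},\overline{\partial})}{B^{3}(\mathcal{C},\partial)\cap\mathcal{C}^{3,0}}\oplus\frac{\ker(\varrho_{3})}{\mathcal{B}^{3}_{1}\cap\mathcal{C}^{2,1}}\oplus\frac{\mathcal{Z}^{3}_{2}\cap\mathcal{C}^{1,2}}{\mathcal{B}^{3}_{2}\cap\mathcal{C}^{1,2}}\oplus\frac{\mathcal{Z}^{3}_{3}}{B^{3}(\mathcal{C}^{0,\bullet},\partial_{0,1})}. \]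
   Context: Setting: $\mathcal{C}^{k}=\bigoplus_{p+q=k}\mathcal{C}^{p,q}$ with $\mathcal{C}^{p,q}=\{0\}$ if $p<0$ or $q<0$; $\partial$ is linear of degree $1$, $\partial^{2}=0$, $\partial=\partial_{2,-1}+\partial_{1,0}+\partial_{0,1}$ with $\partial_{i,j}(\mathcal{C}^{p,q})\subseteq\mathcal{C}^{p+i,q+j}$. For $\eta\in\mathcal{C}^k$, $\eta_{p,q}$ is its $\mathcal{C}^{p,q}$-component. $G^{q}\mathcal{C}:=\bigoplus_{j\geq q}\mathcal{C}^{i,j}$, $\pi_{q}:\mathcal{C}\to G^{q}\mathcal{C}$ the projection along the bigrading. $(\mathcal{C}^{0,\bullet},\partial_{0,1})$ is a cochain complex. $\mathcal{N}^{p,q}:=\ker(\partial_{0,1}|_{\mathcal{C}^{p,q}})\cap\ker(\partial_{2,-1}|_{\mathcal{C}^{p,q}})$, $\mathcal{N}_{q}:=\bigoplus_{p}\mathcal{N}^{p-q,q}$ (degree-$m$ part $\mathcal{N}^{m-q,q}$), a subcomplex with differential $\overline{\partial}:=\partial|_{\mathcal{N}_q}$. $\mathcal{M}^{k}:=\{\eta\in\mathcal{C}^{k}\mid(\partial\eta)_{i,j}\in B^{k+1}(\mathcal{N}_{j},\overline{\partial})\ \forall\, i+j=k+1\}$; $\mathcal{Z}^{k}_{q}:=\{\pi_{q}(\eta)\mid\eta\in\mathcal{M}^{k},\ \pi_{q}(\partial\eta)=0\}$; $\mathcal{B}^{k}_{q}:=\pi_{q}(B^{k}(\mathcal{C},\partial))$.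 $\mathcal{A}^{k}:=\{\pi_{1}(\eta)\mid\eta\in\mathcal{C}^{k},\ \pi_{1}(\partial\eta)=0\}$, $\mathcal{J}^{k}:=\mathcal{A}^{k}\cap\mathcal{C}^{k-1,1}$. For $\xi\in\mathcal{A}^{k}$ and any $\eta$ with $\pi_{1}\eta=\xi$, $\pi_{1}(\partial\eta)=0$, the class $[\partial_{2,-1}\xi_{k-1,1}+\partial_{1,0}\eta_{k,0}]\in H^{k+1}(\mathcal{N}_{0},\overline\partial)$ depends only on $\xi$, defining the linear map $\rho_{k}:\mathcal{A}^{k}\to H^{k+1}(\mathcal{N}_{0},\overline{\partial})$; $\varrho_{k}:=\rho_{k}|_{\mathcal{J}^{k}}$. *)

theory Defs
  imports Complex_Main
begin

text \<open>A bigraded space: an ambient vector space 'v (over a field 'r, scalar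
multiplication sc) which is the internal direct sum of subspaces C p q, p q :: nat
(so C^{p,q} = 0 for negative indices automatically).\<close>

definition decomp :: "(nat \<Rightarrow> nat \<Rightarrow> 'v::ab_group_add set) \<Rightarrow> 'v \<Rightarrow> (nat \<Rightarrow> nat \<Rightarrow> 'v) \<Rightarrow> bool" where
  "decomp C v c \<longleftrightarrow> (\<forall>p q. c p q \<in> C p q) \<and> finite {(p,q). c p q \<noteq> 0}
      \<and> v = (\<Sum>(p,q)\<in>{(p,q). c p q \<noteq> 0}. c p q)"

definition comp :: "(nat \<Rightarrow> nat \<Rightarrow> 'v::ab_group_add set) \<Rightarrow> 'v \<Rightarrow> nat \<Rightarrow> nat \<Rightarrow> 'v" where
  "comp C v = (THE c. decomp C v c)"

definition Ck :: "(nat \<Rightarrow> nat \<Rightarrow> 'v::ab_group_add set) \<Rightarrow> nat \<Rightarrow> 'v set" where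
  "Ck C k = {v. \<forall>p q. comp C v p q \<noteq> 0 \<longrightarrow> p + q = k}"

definition piq :: "(nat \<Rightarrow> nat \<Rightarrow> 'v::ab_group_add set) \<Rightarrow> nat \<Rightarrow> 'v \<Rightarrow> 'v" where
  "piq C q v = (\<Sum>(i,j)\<in>{(i,j). comp C v i j \<noteq> 0 \<and> q \<le> j}. comp C v i j)"

definition bigraded_complex ::
  "('r::field \<Rightarrow> 'v::ab_group_add \<Rightarrow> 'v) \<Rightarrow> (nat \<Rightarrow> nat \<Rightarrow> 'v set)
    \<Rightarrow> ('v \<Rightarrow> 'v) \<Rightarrow> ('v \<Rightarrow> 'v) \<Rightarrow> ('v \<Rightarrow> 'v) \<Rightarrow> ('v \<Rightarrow> 'v) \<Rightarrow> bool" where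
  "bigraded_complex sc C d d21 d10 d01 \<longleftrightarrow>
     vector_space sc
   \<and> (\<forall>p q. 0 \<in> C p q \<and> (\<forall>x\<in>C p q. \<forall>y\<in>C p q. x + y \<in> C p q) \<and> (\<forall>c. \<forall>x\<in>C p q. sc c x \<in> C p q))
   \<and> (\<forall>v. \<exists>!c. decomp C v c)
   \<and> Vector_Spaces.linear sc sc d \<and> Vector_Spaces.linear sc sc d21
   \<and> Vector_Spaces.linear sc sc d10 \<and> Vector_Spaces.linear sc sc d01
   \<and> (\<forall>v. d (d v) = 0)
   \<and> (\<forall>v. d v = d21 v + d10 v + d01 v)
   \<and> (\<forall>p q. \<forall>v\<in>C p q. d21 v \<in> (if q = 0 then {0} else C (p+2) (q-1)))
   \<and> (\<forall>p q. \<forall>v\<in>C p q. d10 v \<in> C (p+1) q)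
   \<and> (\<forall>p q. \<forall>v\<in>C p q. d01 v \<in> C p (q+1))"

definition Zd :: "(nat \<Rightarrow> nat \<Rightarrow> 'v::ab_group_add set) \<Rightarrow> ('v \<Rightarrow> 'v) \<Rightarrow> nat \<Rightarrow> 'v set" where
  "Zd C d k = {x \<in> Ck C k. d x = 0}"

definition Bd :: "(nat \<Rightarrow> nat \<Rightarrow> 'v::ab_group_add set) \<Rightarrow> ('v \<Rightarrow> 'v) \<Rightarrow> nat \<Rightarrow> 'v set" where
  "Bd C d k = {y \<in> Ck C k. \<exists>x. y = d x}"

definition B0 :: "(nat \<Rightarrow> nat \<Rightarrow> 'v::ab_group_add set) \<Rightarrow> ('v \<Rightarrow> 'v) \<Rightarrow> nat \<Rightarrow> 'v set" where
  "B0 C d01 k = (if k = 0 then {0} else d01 ` C 0 (k - 1))"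

definition Npq :: "(nat \<Rightarrow> nat \<Rightarrow> 'v::ab_group_add set) \<Rightarrow> ('v \<Rightarrow> 'v) \<Rightarrow> ('v \<Rightarrow> 'v) \<Rightarrow> nat \<Rightarrow> nat \<Rightarrow> 'v set" where
  "Npq C d21 d01 p q = {v \<in> C p q. d01 v = 0 \<and> d21 v = 0}"

definition Nq :: "(nat \<Rightarrow> nat \<Rightarrow> 'v::ab_group_add set) \<Rightarrow> ('v \<Rightarrow> 'v) \<Rightarrow> ('v \<Rightarrow> 'v) \<Rightarrow> nat \<Rightarrow> nat \<Rightarrow> 'v set" where
  "Nq C d21 d01 q m = (if q \<le> m then Npq C d21 d01 (m - q) q else {0})"

definition BN :: "(nat \<Rightarrow> nat \<Rightarrow> 'v::ab_group_add set) \<Rightarrow> ('v \<Rightarrow> 'v) \<Rightarrow> ('v \<Rightarrow> 'v) \<Rightarrow> ('v \<Rightarrow> 'v) \<Rightarrow> nat \<Rightarrow> nat \<Rightarrow> 'v set" where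
  "BN C d d21 d01 q k = (if k = 0 then {0} else d ` Nq C d21 d01 q (k - 1))"

definition ZN :: "(nat \<Rightarrow> nat \<Rightarrow> 'v::ab_group_add set) \<Rightarrow> ('v \<Rightarrow> 'v) \<Rightarrow> ('v \<Rightarrow> 'v) \<Rightarrow> ('v \<Rightarrow> 'v) \<Rightarrow> nat \<Rightarrow> nat \<Rightarrow> 'v set" where
  "ZN C d d21 d01 q k = {x \<in> Nq C d21 d01 q k. d x = 0}"

definition Mk :: "(nat \<Rightarrow> nat \<Rightarrow> 'v::ab_group_add set) \<Rightarrow> ('v \<Rightarrow> 'v) \<Rightarrow> ('v \<Rightarrow> 'v) \<Rightarrow> ('v \<Rightarrow> 'v) \<Rightarrow> nat \<Rightarrow> 'v set" where
  "Mk C d d21 d01 k = {\<eta> \<in> Ck C k. \<forall>i j. i + j = k + 1 \<longrightarrow> comp C (d \<eta>) i j \<in> BN C d d21 d01 j (k + 1)}"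

definition Zcal :: "(nat \<Rightarrow> nat \<Rightarrow> 'v::ab_group_add set) \<Rightarrow> ('v \<Rightarrow> 'v) \<Rightarrow> ('v \<Rightarrow> 'v) \<Rightarrow> ('v \<Rightarrow> 'v) \<Rightarrow> nat \<Rightarrow> nat \<Rightarrow> 'v set" where
  "Zcal C d d21 d01 k q = {piq C q \<eta> | \<eta>. \<eta> \<in> Mk C d d21 d01 k \<and> piq C q (d \<eta>) = 0}"

definition Bcal :: "(nat \<Rightarrow> nat \<Rightarrow> 'v::ab_group_add set) \<Rightarrow> ('v \<Rightarrow> 'v) \<Rightarrow> nat \<Rightarrow> nat \<Rightarrow> 'v set" where
  "Bcal C d k q = piq C q ` Bd C d k"

definition Acal :: "(nat \<Rightarrow> nat \<Rightarrow> 'v::ab_group_add set) \<Rightarrow> ('v \<Rightarrow> 'v) \<Rightarrow> nat \<Rightarrow> 'v set" where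
  "Acal C d k = {piq C 1 \<eta> | \<eta>. \<eta> \<in> Ck C k \<and> piq C 1 (d \<eta>) = 0}"

definition Jcal :: "(nat \<Rightarrow> nat \<Rightarrow> 'v::ab_group_add set) \<Rightarrow> ('v \<Rightarrow> 'v) \<Rightarrow> nat \<Rightarrow> 'v set" where
  "Jcal C d k = Acal C d k \<inter> C (k - 1) 1"

text \<open>ker(varrho_k): those xi in J^k whose class
  [d21 xi_{k-1,1} + d10 eta_{k,0}] in H^{k+1}(N_0) vanishes, for a lift eta of xi
  (the class is independent of the lift, so "some lift" = "every lift").\<close>
definition ker_varrho :: "(nat \<Rightarrow> nat \<Rightarrow> 'v::ab_group_add set) \<Rightarrow> ('v \<Rightarrow> 'v) \<Rightarrow> ('v \<Rightarrow> 'v) \<Rightarrow> ('v \<Rightarrow> 'v) \<Rightarrow> ('v \<Rightarrow> 'v) \<Rightarrow> nat \<Rightarrow> 'v set" where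
  "ker_varrho C d d21 d10 d01 k = {\<xi> \<in> Jcal C d k. \<exists>\<eta>. \<eta> \<in> Ck C k \<and> piq C 1 \<eta> = \<xi> \<and> piq C 1 (d \<eta>) = 0 \<and>
      d21 (comp C \<xi> (k - 1) 1) + d10 (comp C \<eta> k 0) \<in> BN C d d21 d01 0 (k + 1)}"

text \<open>A linear isomorphism of quotient spaces A/B \<cong> (X_1/Y_1) \<oplus> ... \<oplus> (X_n/Y_n)
  (list L = [(X_1,Y_1),...]), expressed through a lift: a linear map f = (f_1,...,f_n)
  on A with f_i(A) \<subseteq> X_i inducing a well-defined, injective and surjective map on the
  quotients. For B = {0}, Y_i = {0} this is just a linear bijection A \<cong> X_1 \<oplus> ... \<oplus> X_n.\<close>
definition quot_sum_iso :: "('r \<Rightarrow> 'v::ab_group_add \<Rightarrow> 'v) \<Rightarrow> 'v set \<Rightarrow> 'v set \<Rightarrow> ('v set \<times> 'v set) list \<Rightarrow> bool" where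
  "quot_sum_iso sc A B L \<longleftrightarrow> (\<exists>f :: nat \<Rightarrow> 'v \<Rightarrow> 'v.
      (\<forall>i<length L. (\<forall>x\<in>A. \<forall>y\<in>A. f i (x + y) = f i x + f i y)
                   \<and> (\<forall>c. \<forall>x\<in>A. f i (sc c x) = sc c (f i x))
                   \<and> (\<forall>x\<in>A. f i x \<in> fst (L ! i)))
    \<and> (\<forall>x\<in>A. x \<in> B \<longleftrightarrow> (\<forall>i<length L. f i x \<in> snd (L ! i)))
    \<and> (\<forall>y. (\<forall>i<length L. y i \<in> fst (L ! i)) \<longrightarrow> (\<exists>x\<in>A. \<forall>i<length L. y i - f i x \<in> snd (L ! i))))"

end

theory Submission
  imports Defs
begin

(*
  The degree-k cocycles are filtered by the columns they occupy,
  F_q = {z in Z^k. z_{i,j} = 0 for j >= q}, so that Z^k = F_{k+1}, F_0 = 0, and on F_{q+1} the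
  component map z |-> z_{k-q,q} has kernel F_q. Over a field such a filtration splits, compatibly
  with any subspace B: A/B is the direct sum of the images of the F_{q+1} modulo the images of
  B meet F_{q+1}. A cocycle can be rebuilt from its
  columns >= q: the lower components of d eta lie in d(N_j), and subtracting the corresponding
  elements of N, on which d = d10, kills them while changing eta only below column q. This yields
  Z_q meet C^{k-q,q}, and ker varrho in column 1; the bottom piece consists of the cocycles in
  C^{k,0}, i.e. Z^k(N_0), and the coboundary pieces are the projections B_q, the top one being
  d01(C^{0,k-1}).
*)

section \<open>Splitting filtrations of vector spaces\<close>

context vector_space
begin

lemma linear_section_on_image:
  assumes A: "subspace A" and B: "subspace B" and BA: "B \<subseteq> A"
    and P: "Vector_Spaces.linear scale scale P"
  obtains s where "Vector_Spaces.linear scale scale s" "s ` P ` A \<subseteq> A" "s ` P ` B \<subseteq> B"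
    "\<And>v. v \<in> P ` A \<Longrightarrow> P (s v) = v"
proof -
  interpret p: vector_space_pair scale scale by unfold_locales
  obtain CB where CB: "CB \<subseteq> P ` B" "independent CB" "P ` B \<subseteq> span CB"
    using maximal_independent_subset[of "P ` B"] by blast
  obtain CA where CA: "CB \<subseteq> CA" "CA \<subseteq> P ` A" "independent CA" "P ` A \<subseteq> span CA"
  proof -
    have "CB \<subseteq> P ` A" using CB(1) BA by (meson image_mono order_trans)
    then show ?thesis using maximal_independent_subset_extend[of CB "P ` A"] CB(2) that by blast
  qed
  have "\<forall>v\<in>CA. \<exists>u. (v \<in> CB \<longrightarrow> u \<in> B) \<and> u \<in> A \<and> P u = v"
    using CB(1) CA(2) BA by (metis (no_types, lifting) imageE subsetD)
  then obtain g where g: "\<And>v. v \<in> CA \<Longrightarrow> (v \<in> CB \<longrightarrow> g v \<in> B) \<and> g v \<in> A \<and> P (g v) = v"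
    by metis
  define s where "s = p.construct CA g"
  have s_lin: "Vector_Spaces.linear scale scale s"
    unfolding s_def by (rule p.linear_construct[OF CA(3)])
  have s_basis: "s v = g v" if "v \<in> CA" for v
    unfolding s_def using p.construct_basis[OF CA(3) that] .
  show thesis
  proof
    show "Vector_Spaces.linear scale scale s" by (fact s_lin)
    have "s v \<in> span (g ` CA)" for v
      unfolding s_def by (rule p.construct_in_span[OF CA(3)])
    moreover have "span (g ` CA) \<subseteq> A" using g A by (intro span_minimal) auto
    ultimately show "s ` P ` A \<subseteq> A" by auto
    have "s ` span CB = span (s ` CB)" by (rule p.linear_span_image[OF s_lin, symmetric])
    also have "\<dots> \<subseteq> B" using s_basis g CA(1) B by (intro span_minimal) auto
    finally show "s ` P ` B \<subseteq> B" using CB(3) by blast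
    fix v assume "v \<in> P ` A"
    then have "v \<in> span CA" using CA(4) by blast
    then have "(P \<circ> s) v = id v"
      by (rule p.linear_eq_on[OF Vector_Spaces.linear_compose[OF s_lin P] linear_id])
         (simp add: s_basis g)
    then show "P (s v) = v" by simp
  qed
qed

lemma quot_sum_iso_Nil:
  assumes "A \<subseteq> B" "0 \<in> A"
  shows "quot_sum_iso scale A B []"
  using assms unfolding quot_sum_iso_def by auto

lemma quot_sum_isoE:
  assumes "quot_sum_iso scale A B L"
  obtains f where
    "\<And>i x y. i < length L \<Longrightarrow> x \<in> A \<Longrightarrow> y \<in> A \<Longrightarrow> f i (x + y) = f i x + f i y"
    "\<And>i c x. i < length L \<Longrightarrow> x \<in> A \<Longrightarrow> f i (scale c x) = scale c (f i x)"
    "\<And>i x. i < length L \<Longrightarrow> x \<in> A \<Longrightarrow> f i x \<in> fst (L ! i)"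
    "\<And>x. x \<in> A \<Longrightarrow> x \<in> B \<longleftrightarrow> (\<forall>i<length L. f i x \<in> snd (L ! i))"
    "\<And>y. \<forall>i<length L. y i \<in> fst (L ! i) \<Longrightarrow> \<exists>x\<in>A. \<forall>i<length L. y i - f i x \<in> snd (L ! i)"
  using assms unfolding quot_sum_iso_def by (elim exE conjE) (rule that, simp_all, blast)

text \<open>A linear section of P that maps P ` B into B splits A as ker P plus its image, compatibly
  with B.\<close>

lemma quot_sum_iso_snoc:
  assumes A: "subspace A" and B: "subspace B" and BA: "B \<subseteq> A"
    and P: "Vector_Spaces.linear scale scale P"
    and ker: "quot_sum_iso scale {x \<in> A. P x = 0} (B \<inter> {x \<in> A. P x = 0}) L"
  shows "quot_sum_iso scale A B (L @ [(P ` A, P ` B)])"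
proof -
  interpret P: Vector_Spaces.linear scale scale P by (fact P)
  let ?K = "{x \<in> A. P x = 0}" and ?M = "L @ [(P ` A, P ` B)]"
  obtain s where s: "Vector_Spaces.linear scale scale s" "s ` P ` A \<subseteq> A" "s ` P ` B \<subseteq> B"
    and Ps: "\<And>v. v \<in> P ` A \<Longrightarrow> P (s v) = v"
    using linear_section_on_image[OF A B BA P] by blast
  interpret s: Vector_Spaces.linear scale scale s by (fact s(1))
  obtain g
    where g_add: "\<And>i x y. i < length L \<Longrightarrow> x \<in> ?K \<Longrightarrow> y \<in> ?K \<Longrightarrow> g i (x + y) = g i x + g i y"
    and g_scale: "\<And>i c x. i < length L \<Longrightarrow> x \<in> ?K \<Longrightarrow> g i (scale c x) = scale c (g i x)"
    and g_in: "\<And>i x. i < length L \<Longrightarrow> x \<in> ?K \<Longrightarrow> g i x \<in> fst (L ! i)"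
    and g_inj: "\<And>x. x \<in> ?K \<Longrightarrow> x \<in> B \<inter> ?K \<longleftrightarrow> (\<forall>i<length L. g i x \<in> snd (L ! i))"
    and g_surj: "\<And>y. \<forall>i<length L. y i \<in> fst (L ! i) \<Longrightarrow>
      \<exists>x\<in>?K. \<forall>i<length L. y i - g i x \<in> snd (L ! i)"
    by (rule quot_sum_isoE[OF ker]) blast
  define r where "r x = x - s (P x)" for x
  have r_lin: "r (x + y) = r x + r y" "r (scale c x) = scale c (r x)" for c x y
    unfolding r_def by (simp_all add: P.add s.add P.scale s.scale scale_right_diff_distrib)
  have r_K: "r x \<in> ?K" if "x \<in> A" for x
    using that s(2) Ps A unfolding r_def by (auto simp: P.diff intro: subspace_diff)
  have r_B: "r x \<in> B" if "x \<in> B" for x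
    using that s(3) B unfolding r_def by (blast intro: subspace_diff)
  define f where "f i = (if i < length L then g i \<circ> r else P)" for i
  have nth_snoc: "?M ! i = (if i < length L then L ! i else (P ` A, P ` B))"
    if "i < Suc (length L)" for i
    using that by (auto simp: nth_append less_Suc_eq)
  show ?thesis
    unfolding quot_sum_iso_def
  proof (intro exI conjI allI impI ballI)
    fix i assume "i < length ?M"
    then show "f i (x + y) = f i x + f i y" "f i (scale c x) = scale c (f i x)"
      "f i x \<in> fst (?M ! i)" if "x \<in> A" "y \<in> A" for c x y
      using that r_K g_add g_scale g_in by (auto simp: f_def nth_snoc r_lin P.add P.scale)
  next
    fix x assume x: "x \<in> A"
    have "x \<in> B \<longleftrightarrow> r x \<in> B \<inter> ?K \<and> P x \<in> P ` B"
    proof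
      assume "r x \<in> B \<inter> ?K \<and> P x \<in> P ` B"
      then have "r x + s (P x) \<in> B" using s(3) B by (blast intro: subspace_add)
      then show "x \<in> B" unfolding r_def by simp
    qed (use r_B r_K[OF x] in blast)
    also have "\<dots> \<longleftrightarrow> (\<forall>i<length L. g i (r x) \<in> snd (L ! i)) \<and> P x \<in> P ` B"
      using g_inj[OF r_K[OF x]] by simp
    also have "\<dots> \<longleftrightarrow> (\<forall>i<length ?M. f i x \<in> snd (?M ! i))"
      by (auto simp: f_def nth_snoc less_Suc_eq)
    finally show "x \<in> B \<longleftrightarrow> (\<forall>i<length ?M. f i x \<in> snd (?M ! i))" .
  next
    fix y assume y: "\<forall>i<length ?M. y i \<in> fst (?M ! i)"
    have "\<forall>i<length L. y i \<in> fst (L ! i)" using y by (metis length_append_singleton less_SucI nth_append)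
    then obtain x' where x': "x' \<in> ?K" "\<forall>i<length L. y i - g i x' \<in> snd (L ! i)"
      using g_surj by blast
    have y_last: "y (length L) \<in> P ` A" using y[rule_format, of "length L"] by simp
    define x where "x = x' + s (y (length L))"
    have "x \<in> A" using x'(1) y_last s(2) A unfolding x_def by (auto intro: subspace_add)
    moreover have Px: "P x = y (length L)" using x'(1) Ps[OF y_last] unfolding x_def by (simp add: P.add)
    moreover have "r x = x'" using Px unfolding r_def x_def by simp
    moreover have "0 \<in> P ` B" using B P.zero subspace_0 by (metis image_eqI)
    ultimately show "\<exists>x\<in>A. \<forall>i<length ?M. y i - f i x \<in> snd (?M ! i)"
      using x'(2) by (intro bexI[of _ x]) (auto simp: f_def nth_snoc less_Suc_eq)
  qed
qed

lemma quot_sum_iso_filtration: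
  assumes F: "\<And>q. q \<le> n \<Longrightarrow> subspace (F q)" and B: "subspace B" and F0: "F 0 \<subseteq> B"
    and P: "\<And>q. q < n \<Longrightarrow> Vector_Spaces.linear scale scale (P q)"
    and ker: "\<And>q. q < n \<Longrightarrow> {x \<in> F (Suc q). P q x = 0} = F q"
    and L: "length L = n" "\<And>q. q < n \<Longrightarrow> L ! q = (P q ` F (Suc q), P q ` (B \<inter> F (Suc q)))"
  shows "quot_sum_iso scale (F n) (B \<inter> F n) L"
  using F P ker L
proof (induction n arbitrary: L)
  case 0
  then show ?case using F0 subspace_0 by (auto intro: quot_sum_iso_Nil)
next
  case (Suc n)
  have "B \<inter> F (Suc n) \<inter> {x \<in> F (Suc n). P n x = 0} = B \<inter> F n"
    using Suc.prems(3) by auto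
  moreover have "quot_sum_iso scale (F n) (B \<inter> F n) (take n L)"
    using Suc by (intro Suc.IH) auto
  ultimately have "quot_sum_iso scale (F (Suc n)) (B \<inter> F (Suc n))
      (take n L @ [(P n ` F (Suc n), P n ` (B \<inter> F (Suc n)))])"
    using Suc.prems B by (intro quot_sum_iso_snoc) (auto intro: subspace_inter)
  moreover have "L = take n L @ [L ! n]"
    using Suc.prems(4) by (metis lessI take_Suc_conv_app_nth take_all_iff order_refl)
  ultimately show ?case using Suc.prems(5) by simp
qed

end

lemma sum_if_eq_conj:
  assumes "finite U" "a \<in> U"
  shows "(\<Sum>t\<in>U. if t = a \<and> P then f t else 0) = (if P then f a else 0)"
  using assms by (cases P) (simp_all add: sum.delta)

section \<open>Components in a bigraded complex\<close>

locale bigraded_cochain_complex =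
  fixes sc :: "'r::field \<Rightarrow> 'v::ab_group_add \<Rightarrow> 'v"
    and C :: "nat \<Rightarrow> nat \<Rightarrow> 'v set"
    and d d21 d10 d01 :: "'v \<Rightarrow> 'v"
  assumes bigraded_complex: "bigraded_complex sc C d d21 d10 d01"
begin

sublocale V: vector_space sc
  using bigraded_complex unfolding bigraded_complex_def by blast

sublocale d: Vector_Spaces.linear sc sc d
  using bigraded_complex unfolding bigraded_complex_def by blast

sublocale d21: Vector_Spaces.linear sc sc d21
  using bigraded_complex unfolding bigraded_complex_def by blast

sublocale d10: Vector_Spaces.linear sc sc d10
  using bigraded_complex unfolding bigraded_complex_def by blast

sublocale d01: Vector_Spaces.linear sc sc d01
  using bigraded_complex unfolding bigraded_complex_def by blast

lemma C_subspace: "V.subspace (C p q)"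
  using bigraded_complex unfolding bigraded_complex_def V.subspace_def by blast

lemma decomp_ex1: "\<exists>!c. decomp C v c"
  using bigraded_complex unfolding bigraded_complex_def by simp

lemma d_d [simp]: "d (d v) = 0"
  using bigraded_complex unfolding bigraded_complex_def by blast

lemma d_split: "d v = d21 v + d10 v + d01 v"
  using bigraded_complex unfolding bigraded_complex_def by blast

lemma d21_C: "v \<in> C p q \<Longrightarrow> d21 v \<in> (if q = 0 then {0} else C (p + 2) (q - 1))"
  and d10_C: "v \<in> C p q \<Longrightarrow> d10 v \<in> C (Suc p) q"
  and d01_C: "v \<in> C p q \<Longrightarrow> d01 v \<in> C p (Suc q)"
  using bigraded_complex unfolding bigraded_complex_def by auto

lemma C_zero [simp]: "0 \<in> C p q"
  using C_subspace V.subspace_0 by blast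

lemma decompI:
  assumes "\<And>p q. c p q \<in> C p q" "finite U" "{(p, q). c p q \<noteq> 0} \<subseteq> U"
    and "v = (\<Sum>(p, q)\<in>U. c p q)"
  shows "decomp C v c"
proof -
  have "finite {(p, q). c p q \<noteq> 0}" using assms(2,3) finite_subset by blast
  moreover have "(\<Sum>(p, q)\<in>{(p, q). c p q \<noteq> 0}. c p q) = (\<Sum>(p, q)\<in>U. c p q)"
    using assms(2,3) by (intro sum.mono_neutral_left) auto
  ultimately show ?thesis using assms(1,4) unfolding decomp_def by simp
qed

lemma comp_decomp: "decomp C v (comp C v)"
  unfolding comp_def by (rule theI'[OF decomp_ex1])

lemma comp_eqI: "decomp C v c \<Longrightarrow> comp C v = c"
  unfolding comp_def by (rule the1_equality[OF decomp_ex1])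

lemma comp_in_C: "comp C v p q \<in> C p q"
  using comp_decomp unfolding decomp_def by blast

lemma sum_comp:
  assumes "finite U" "{(p, q). comp C v p q \<noteq> 0} \<subseteq> U"
  shows "(\<Sum>(p, q)\<in>U. comp C v p q) = v"
proof -
  have "(\<Sum>(p, q)\<in>U. comp C v p q) = (\<Sum>(p, q)\<in>{(p, q). comp C v p q \<noteq> 0}. comp C v p q)"
    using assms by (intro sum.mono_neutral_right) auto
  also have "\<dots> = v" using comp_decomp unfolding decomp_def by simp
  finally show ?thesis .
qed

lemma finite_comp_support: "finite {(p, q). comp C v p q \<noteq> 0}"
  using comp_decomp unfolding decomp_def by blast

lemma comp_inject:
  assumes "\<And>p q. comp C v p q = comp C w p q"
  shows "v = w"
proof -
  let ?U = "{(p, q). comp C v p q \<noteq> 0}"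
  have "v = (\<Sum>(p, q)\<in>?U. comp C v p q)"
    by (rule sum_comp[symmetric]) (simp_all add: finite_comp_support)
  also have "\<dots> = (\<Sum>(p, q)\<in>?U. comp C w p q)"
    by (simp add: assms)
  also have "\<dots> = w"
    using assms by (intro sum_comp[OF finite_comp_support]) simp
  finally show ?thesis .
qed

lemma comp_add: "comp C (v + w) p q = comp C v p q + comp C w p q"
proof -
  let ?U = "{(p, q). comp C v p q \<noteq> 0} \<union> {(p, q). comp C w p q \<noteq> 0}"
  have "v + w = (\<Sum>(p, q)\<in>?U. comp C v p q) + (\<Sum>(p, q)\<in>?U. comp C w p q)"
    using finite_comp_support by (simp add: sum_comp)
  then have "decomp C (v + w) (\<lambda>p q. comp C v p q + comp C w p q)"
    using finite_comp_support
    by (intro decompI[where U = ?U]) (auto simp: V.subspace_add[OF C_subspace] comp_in_C sum.distrib case_prod_beta)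
  then show ?thesis by (simp add: comp_eqI)
qed

lemma comp_scale: "comp C (sc a v) p q = sc a (comp C v p q)"
proof -
  let ?U = "{(p, q). comp C v p q \<noteq> 0}"
  have "sc a v = sc a (\<Sum>(p, q)\<in>?U. comp C v p q)"
    by (simp add: sum_comp finite_comp_support)
  also have "\<dots> = (\<Sum>(p, q)\<in>?U. sc a (comp C v p q))"
    by (simp add: V.scale_sum_right case_prod_unfold)
  finally have "decomp C (sc a v) (\<lambda>p q. sc a (comp C v p q))"
    using finite_comp_support
    by (intro decompI[where U = ?U]) (auto simp: V.subspace_scale[OF C_subspace] comp_in_C)
  then show ?thesis by (simp add: comp_eqI)
qed

lemma linear_comp: "Vector_Spaces.linear sc sc (\<lambda>v. comp C v p q)"
  by (simp add: Vector_Spaces.linear_iff V.vector_space_axioms comp_add comp_scale)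

lemma comp_zero [simp]: "comp C 0 i j = 0"
  using comp_add[of 0 0 i j] by simp

lemma comp_diff: "comp C (v - w) p q = comp C v p q - comp C w p q"
  using comp_add[of "v - w" w p q] by (simp add: eq_diff_eq)

lemma comp_of_C:
  assumes "u \<in> C p q"
  shows "comp C u i j = (if i = p \<and> j = q then u else 0)"
proof -
  have "decomp C u (\<lambda>i j. if i = p \<and> j = q then u else 0)"
    using assms by (intro decompI[where U = "{(p, q)}"]) auto
  then show ?thesis by (simp add: comp_eqI)
qed

lemma in_C_iff_comp: "v \<in> C p q \<longleftrightarrow> (\<forall>i j. (i, j) \<noteq> (p, q) \<longrightarrow> comp C v i j = 0)"
proof
  assume off: "\<forall>i j. (i, j) \<noteq> (p, q) \<longrightarrow> comp C v i j = 0"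
  have "v = comp C v p q"
  proof (rule comp_inject)
    fix i j
    show "comp C v i j = comp C (comp C v p q) i j"
    proof (cases "i = p \<and> j = q")
      case False
      then show ?thesis using off comp_of_C[OF comp_in_C, of v p q i j] by auto
    qed (simp add: comp_of_C[OF comp_in_C])
  qed
  with comp_in_C show "v \<in> C p q" by metis
qed (simp add: comp_of_C)

lemma comp_sum: "finite S \<Longrightarrow> comp C (\<Sum>x\<in>S. f x) i j = (\<Sum>x\<in>S. comp C (f x) i j)"
  by (induction S rule: finite_induct) (simp_all add: comp_add)

lemma comp_d_of_C:
  assumes u: "u \<in> C p q"
  shows "comp C (d u) i j = (if (p, q) = (i - 2, j + 1) \<and> 2 \<le> i then d21 u else 0)
     + (if (p, q) = (i - 1, j) \<and> 1 \<le> i then d10 u else 0)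
     + (if (p, q) = (i, j - 1) \<and> 1 \<le> j then d01 u else 0)"
proof -
  have "comp C (d21 u) i j = (if (p, q) = (i - 2, j + 1) \<and> 2 \<le> i then d21 u else 0)"
  proof (cases "q = 0")
    case False
    then have "d21 u \<in> C (p + 2) (q - 1)" using d21_C[OF u] by simp
    then show ?thesis using False by (auto simp: comp_of_C)
  qed (use d21_C[OF u] in \<open>simp\<close>)
  moreover have "comp C (d10 u) i j = (if (p, q) = (i - 1, j) \<and> 1 \<le> i then d10 u else 0)"
    using comp_of_C[OF d10_C[OF u]] by auto
  moreover have "comp C (d01 u) i j = (if (p, q) = (i, j - 1) \<and> 1 \<le> j then d01 u else 0)"
    using comp_of_C[OF d01_C[OF u]] by auto
  ultimately show ?thesis by (simp add: d_split comp_add)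
qed

lemma comp_d:
  "comp C (d x) i j = (if 2 \<le> i then d21 (comp C x (i - 2) (j + 1)) else 0)
     + (if 1 \<le> i then d10 (comp C x (i - 1) j) else 0)
     + (if 1 \<le> j then d01 (comp C x i (j - 1)) else 0)"
proof -
  define U where "U = {(p, q). comp C x p q \<noteq> 0} \<union> {(i - 2, j + 1), (i - 1, j), (i, j - 1)}"
  define g where "g t = comp C x (fst t) (snd t)" for t
  have U: "finite U" by (simp add: U_def finite_comp_support)
  have "x = (\<Sum>(p, q)\<in>U. comp C x p q)" by (rule sum_comp[OF U, symmetric]) (auto simp: U_def)
  then have x: "x = (\<Sum>t\<in>U. g t)" by (simp add: g_def case_prod_unfold)
  have comp_d_g: "comp C (d (g t)) i j = (if t = (i - 2, j + 1) \<and> 2 \<le> i then d21 (g t) else 0)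
     + (if t = (i - 1, j) \<and> 1 \<le> i then d10 (g t) else 0)
     + (if t = (i, j - 1) \<and> 1 \<le> j then d01 (g t) else 0)" for t
    by (cases t) (simp only: g_def fst_conv snd_conv comp_d_of_C[OF comp_in_C])
  have "comp C (d x) i j = (\<Sum>t\<in>U. comp C (d (g t)) i j)"
    by (subst x) (simp add: d.sum comp_sum[OF U])
  also have "\<dots> = (\<Sum>t\<in>U. if t = (i - 2, j + 1) \<and> 2 \<le> i then d21 (g t) else 0)
     + (\<Sum>t\<in>U. if t = (i - 1, j) \<and> 1 \<le> i then d10 (g t) else 0)
     + (\<Sum>t\<in>U. if t = (i, j - 1) \<and> 1 \<le> j then d01 (g t) else 0)"
    by (simp add: comp_d_g sum.distrib)
  also have "\<dots> = (if 2 \<le> i then d21 (comp C x (i - 2) (j + 1)) else 0)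
     + (if 1 \<le> i then d10 (comp C x (i - 1) j) else 0)
     + (if 1 \<le> j then d01 (comp C x i (j - 1)) else 0)"
    using U by (simp add: sum_if_eq_conj U_def g_def)
  finally show ?thesis .
qed

lemma comp_Ck: "v \<in> Ck C k \<Longrightarrow> p + q \<noteq> k \<Longrightarrow> comp C v p q = 0"
  unfolding Ck_def by blast

lemma CkI: "(\<And>p q. p + q \<noteq> k \<Longrightarrow> comp C v p q = 0) \<Longrightarrow> v \<in> Ck C k"
  unfolding Ck_def by blast

lemma C_subset_Ck: "p + q = k \<Longrightarrow> C p q \<subseteq> Ck C k"
  by (auto intro: CkI simp: comp_of_C)

lemma Ck_subspace: "V.subspace (Ck C k)"
  unfolding V.subspace_def by (auto intro!: CkI simp: comp_add comp_scale comp_Ck)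

lemma d_Ck: "x \<in> Ck C k \<Longrightarrow> d x \<in> Ck C (Suc k)"
  by (rule CkI) (auto simp: comp_d comp_Ck)

lemma comp_piq: "comp C (piq C q v) i j = (if q \<le> j then comp C v i j else 0)"
proof -
  have "decomp C (piq C q v) (\<lambda>i j. if q \<le> j then comp C v i j else 0)"
  proof (rule decompI[OF _ finite_comp_support])
    show "piq C q v = (\<Sum>(i, j)\<in>{(i, j). comp C v i j \<noteq> 0}. if q \<le> j then comp C v i j else 0)"
      unfolding piq_def by (rule sum.mono_neutral_cong_left[OF finite_comp_support]) (auto split: if_splits)
  qed (auto simp: comp_in_C)
  then show ?thesis by (simp add: comp_eqI)
qed

lemma piq_0: "piq C 0 v = v"
  by (rule comp_inject) (simp add: comp_piq)

lemma piq_eq_0_iff: "piq C q v = 0 \<longleftrightarrow> (\<forall>i j. q \<le> j \<longrightarrow> comp C v i j = 0)"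
proof
  assume "\<forall>i j. q \<le> j \<longrightarrow> comp C v i j = 0"
  then have "comp C (piq C q v) i j = comp C 0 i j" for i j by (simp add: comp_piq)
  then show "piq C q v = 0" by (rule comp_inject)
next
  assume "piq C q v = 0"
  then have "comp C (piq C q v) i j = 0" for i j by simp
  then show "\<forall>i j. q \<le> j \<longrightarrow> comp C v i j = 0" by (metis comp_piq)
qed

lemma piq_zero [simp]: "piq C q 0 = 0"
  by (simp add: piq_eq_0_iff)

lemma piq_Ck:
  assumes "v \<in> Ck C k" "q \<le> k" "\<And>i j. q < j \<Longrightarrow> comp C v i j = 0"
  shows "piq C q v = comp C v (k - q) q"
proof (rule comp_inject)
  fix i j
  show "comp C (piq C q v) i j = comp C (comp C v (k - q) q) i j"
    using assms comp_Ck[OF assms(1), of i j]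
    by (cases "q < j") (auto simp: comp_piq comp_of_C[OF comp_in_C])
qed

lemma comp_above_piq_in_C:
  assumes "piq C q v \<in> C p q" "q < j"
  shows "comp C v i j = 0"
proof -
  have "comp C (piq C q v) i j = 0" using assms by (simp add: in_C_iff_comp)
  then show ?thesis using assms(2) by (simp add: comp_piq)
qed

section \<open>The column filtration of the cocycles\<close>

lemma Zd_subspace: "V.subspace (Zd C d k)"
  using Ck_subspace unfolding Zd_def V.subspace_def by (auto simp: d.add d.scale)

lemma Bd_subspace: "V.subspace (Bd C d k)"
proof -
  have "Bd C d k = Ck C k \<inter> range d" unfolding Bd_def by auto
  then show ?thesis
    using Ck_subspace d.subspace_image[OF V.subspace_UNIV] by (simp add: V.subspace_inter)
qed

lemma Bd_subset_Zd: "Bd C d k \<subseteq> Zd C d k"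
  unfolding Bd_def Zd_def by auto

lemma Npq_d: "n \<in> Npq C d21 d01 p q \<Longrightarrow> d n = d10 n"
  unfolding Npq_def by (simp add: d_split)

lemma zero_Npq: "0 \<in> Npq C d21 d01 p q"
  unfolding Npq_def by simp

lemma zero_BN: "0 \<in> BN C d d21 d01 q k"
  unfolding BN_def Nq_def using zero_Npq d.zero by (auto intro: image_eqI[of 0 _ 0])

lemma BN_Suc: "j \<le> k \<Longrightarrow> BN C d d21 d01 j (Suc k) = d ` Npq C d21 d01 (k - j) j"
  unfolding BN_def Nq_def by simp

lemma Zd_Mk: "Zd C d k \<subseteq> Mk C d d21 d01 k"
  unfolding Zd_def Mk_def using zero_BN by auto

text \<open>The witness is the element n of N^{k-q,q} with d n equal to the (k+1-q, q)-component of
  d eta; since d n = d10 n sits in exactly that position, subtracting n cancels it.\<close>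

lemma Mk_cancel_column:
  assumes \<eta>_Mk: "\<eta> \<in> Mk C d d21 d01 k" and \<eta>_high: "piq C (Suc q) (d \<eta>) = 0" and q: "q < k"
  obtains n where "n \<in> C (k - q) q" "\<eta> - n \<in> Mk C d d21 d01 k" "piq C q (d (\<eta> - n)) = 0"
proof -
  have \<eta>: "\<eta> \<in> Ck C k"
    and \<eta>_BN: "\<And>i j. i + j = Suc k \<Longrightarrow> comp C (d \<eta>) i j \<in> BN C d d21 d01 j (Suc k)"
    using \<eta>_Mk unfolding Mk_def by auto
  obtain n where n: "n \<in> Npq C d21 d01 (k - q) q" and dn: "comp C (d \<eta>) (Suc (k - q)) q = d n"
    using \<eta>_BN[of "Suc (k - q)" q] q by (auto simp: BN_Suc)
  have nC: "n \<in> C (k - q) q" using n unfolding Npq_def by blast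
  have dnC: "d n \<in> C (Suc (k - q)) q" using d10_C[OF nC] Npq_d[OF n] by simp
  have comp_d_diff: "comp C (d (\<eta> - n)) i j
      = comp C (d \<eta>) i j - (if i = Suc (k - q) \<and> j = q then d n else 0)" for i j
    by (simp add: d.diff comp_diff comp_of_C[OF dnC])
  have "\<eta> - n \<in> Ck C k"
    using \<eta> C_subset_Ck[of "k - q" q k] nC q by (auto intro: V.subspace_diff[OF Ck_subspace])
  moreover have "comp C (d (\<eta> - n)) i j \<in> BN C d d21 d01 j (Suc k)" if "i + j = Suc k" for i j
    using \<eta>_BN[OF that] zero_BN dn by (auto simp: comp_d_diff)
  ultimately have "\<eta> - n \<in> Mk C d d21 d01 k" unfolding Mk_def by simp
  moreover have "comp C (d (\<eta> - n)) i j = 0" if "q \<le> j" for i j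
  proof (cases "j = q")
    case True
    then show ?thesis using comp_Ck[OF d_Ck[OF \<eta>], of i j] q dn by (auto simp: comp_d_diff)
  next
    case False
    then show ?thesis using that \<eta>_high by (simp add: comp_d_diff piq_eq_0_iff)
  qed
  ultimately show thesis using that nC by (simp add: piq_eq_0_iff)
qed

lemma Mk_cocycle_correction:
  assumes "\<eta> \<in> Mk C d d21 d01 k" "piq C q (d \<eta>) = 0" "q \<le> k"
  shows "\<exists>z\<in>Zd C d k. \<forall>i j. q \<le> j \<longrightarrow> comp C z i j = comp C \<eta> i j"
  using assms
proof (induction q arbitrary: \<eta>)
  case 0
  then show ?case unfolding Mk_def Zd_def by (auto simp: piq_0)
next
  case (Suc q)
  obtain n where n: "n \<in> C (k - q) q" "\<eta> - n \<in> Mk C d d21 d01 k" "piq C q (d (\<eta> - n)) = 0"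
    using Mk_cancel_column[OF Suc.prems(1,2)] Suc.prems(3) by auto
  then obtain z where z: "z \<in> Zd C d k" "\<And>i j. q \<le> j \<Longrightarrow> comp C z i j = comp C (\<eta> - n) i j"
    using Suc.IH Suc.prems(3) by fastforce
  show ?case
  proof (intro bexI[of _ z] allI impI)
    fix i j assume "Suc q \<le> j"
    then show "comp C z i j = comp C \<eta> i j" using z(2)[of j i] by (simp add: comp_diff comp_of_C[OF n(1)])
  qed (fact z(1))
qed

definition cocycles_below :: "nat \<Rightarrow> nat \<Rightarrow> 'v set" where
  "cocycles_below k q = {z \<in> Zd C d k. \<forall>i j. q \<le> j \<longrightarrow> comp C z i j = 0}"

lemma cocycles_below_subspace: "V.subspace (cocycles_below k q)"
  using Zd_subspace unfolding cocycles_below_def V.subspace_def by (auto simp: comp_add comp_scale)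

lemma cocycles_below_0: "cocycles_below k 0 = {0}"
proof
  show "cocycles_below k 0 \<subseteq> {0}"
  proof
    fix z assume "z \<in> cocycles_below k 0"
    then have "comp C z i j = comp C 0 i j" for i j unfolding cocycles_below_def by simp
    then show "z \<in> {0}" using comp_inject[of z 0] by simp
  qed
  show "{0} \<subseteq> cocycles_below k 0" using V.subspace_0[OF cocycles_below_subspace] by simp
qed

lemma cocycles_below_Suc_degree: "cocycles_below k (Suc k) = Zd C d k"
  unfolding cocycles_below_def Zd_def by (auto intro: comp_Ck)

lemma cocycles_below_Suc:
  assumes "q \<le> k"
  shows "{z \<in> cocycles_below k (Suc q). comp C z (k - q) q = 0} = cocycles_below k q"
proof (intro equalityI subsetI)
  fix z assume "z \<in> {z \<in> cocycles_below k (Suc q). comp C z (k - q) q = 0}"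
  then have z: "z \<in> Zd C d k" "comp C z (k - q) q = 0" "\<And>i j. Suc q \<le> j \<Longrightarrow> comp C z i j = 0"
    unfolding cocycles_below_def by auto
  have "comp C z i j = 0" if "q \<le> j" for i j
  proof (cases "j = q")
    case True
    then show ?thesis
      using z(2) assms comp_Ck[of z k i q] z(1) unfolding Zd_def by (cases "i = k - q") auto
  qed (use that z(3) in simp)
  then show "z \<in> cocycles_below k q" using z(1) unfolding cocycles_below_def by simp
qed (simp add: cocycles_below_def)

lemma piq_cocycles_below:
  "z \<in> cocycles_below k (Suc q) \<Longrightarrow> q \<le> k \<Longrightarrow> piq C q z = comp C z (k - q) q"
  unfolding cocycles_below_def Zd_def by (auto intro!: piq_Ck simp: Suc_le_eq)

lemma comp_image_cocycles_below_eq_Zcal: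
  assumes "q \<le> k"
  shows "(\<lambda>z. comp C z (k - q) q) ` cocycles_below k (Suc q) = Zcal C d d21 d01 k q \<inter> C (k - q) q"
proof (intro equalityI subsetI)
  fix x assume "x \<in> (\<lambda>z. comp C z (k - q) q) ` cocycles_below k (Suc q)"
  then obtain z where z: "z \<in> cocycles_below k (Suc q)" and x: "x = comp C z (k - q) q" by blast
  have "z \<in> Mk C d d21 d01 k" "piq C q (d z) = 0"
    using z Zd_Mk unfolding cocycles_below_def Zd_def by auto
  then have "x \<in> Zcal C d d21 d01 k q"
    unfolding Zcal_def x piq_cocycles_below[OF z assms, symmetric] by blast
  then show "x \<in> Zcal C d d21 d01 k q \<inter> C (k - q) q" using x comp_in_C by simp
next
  fix x assume "x \<in> Zcal C d d21 d01 k q \<inter> C (k - q) q"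
  then obtain \<eta> where x: "x = piq C q \<eta>" "x \<in> C (k - q) q"
    and \<eta>: "\<eta> \<in> Mk C d d21 d01 k" "piq C q (d \<eta>) = 0"
    unfolding Zcal_def by blast
  obtain z where z: "z \<in> Zd C d k" "\<And>i j. q \<le> j \<Longrightarrow> comp C z i j = comp C \<eta> i j"
    using Mk_cocycle_correction[OF \<eta> assms] by blast
  have \<eta>_high: "comp C \<eta> i j = 0" if "q < j" for i j
    using comp_above_piq_in_C x that by blast
  then have "z \<in> cocycles_below k (Suc q)"
    using z unfolding cocycles_below_def by (simp add: Suc_le_eq)
  moreover have "x = comp C z (k - q) q"
    using x(1) \<eta>(1) \<eta>_high z(2) assms unfolding Mk_def by (simp add: piq_Ck)
  ultimately show "x \<in> (\<lambda>z. comp C z (k - q) q) ` cocycles_below k (Suc q)" by blast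
qed

lemma comp_image_boundaries_below_eq_Bcal:
  assumes "q \<le> k"
  shows "(\<lambda>z. comp C z (k - q) q) ` (Bd C d k \<inter> cocycles_below k (Suc q))
    = Bcal C d k q \<inter> C (k - q) q"
proof (intro equalityI subsetI)
  fix x assume "x \<in> (\<lambda>z. comp C z (k - q) q) ` (Bd C d k \<inter> cocycles_below k (Suc q))"
  then obtain b where b: "b \<in> Bd C d k" "b \<in> cocycles_below k (Suc q)" and x: "x = comp C b (k - q) q"
    by blast
  have "x = piq C q b" using x piq_cocycles_below[OF b(2) assms] by simp
  then have "x \<in> Bcal C d k q" unfolding Bcal_def using b(1) by simp
  then show "x \<in> Bcal C d k q \<inter> C (k - q) q" using x comp_in_C by simp
next
  fix x assume "x \<in> Bcal C d k q \<inter> C (k - q) q"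
  then obtain b where b: "b \<in> Bd C d k" and x: "x = piq C q b" "x \<in> C (k - q) q"
    unfolding Bcal_def by blast
  have "b \<in> cocycles_below k (Suc q)"
    using b Bd_subset_Zd comp_above_piq_in_C x unfolding cocycles_below_def by (auto simp: Suc_le_eq)
  moreover from this have "x = comp C b (k - q) q"
    using x(1) piq_cocycles_below assms by simp
  ultimately show "x \<in> (\<lambda>z. comp C z (k - q) q) ` (Bd C d k \<inter> cocycles_below k (Suc q))"
    using b by blast
qed

lemma comp_image_cocycles_below_1_eq_ZN: "(\<lambda>z. comp C z k 0) ` cocycles_below k 1 = ZN C d d21 d01 0 k"
proof -
  have "cocycles_below k 1 = ZN C d d21 d01 0 k"
  proof (intro equalityI subsetI)
    fix z assume z: "z \<in> cocycles_below k 1"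
    then have z_d: "d z = 0" and z_Ck: "z \<in> Ck C k" unfolding cocycles_below_def Zd_def by auto
    have "comp C z i j = 0" if "(i, j) \<noteq> (k, 0)" for i j
      using z comp_Ck[OF z_Ck, of i j] that unfolding cocycles_below_def by (cases "j = 0") auto
    then have zC: "z \<in> C k 0" by (simp add: in_C_iff_comp)
    have "d01 z = comp C (d z) k 1" by (simp add: comp_d_of_C[OF zC])
    then have "d01 z = 0" using z_d by simp
    moreover have "d21 z = 0" using d21_C[OF zC] by simp
    ultimately show "z \<in> ZN C d d21 d01 0 k"
      unfolding ZN_def Nq_def Npq_def using zC z_d by simp
  next
    fix z assume "z \<in> ZN C d d21 d01 0 k"
    then have zC: "z \<in> C k 0" and "d z = 0" unfolding ZN_def Nq_def Npq_def by auto
    then show "z \<in> cocycles_below k 1"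
      using C_subset_Ck[of k 0 k] unfolding cocycles_below_def Zd_def by (auto simp: comp_of_C)
  qed
  moreover have "comp C z k 0 = z" if "z \<in> ZN C d d21 d01 0 k" for z
    using that unfolding ZN_def Nq_def Npq_def by (auto simp: comp_of_C)
  ultimately show ?thesis by simp
qed

lemma comp_d_bottom:
  "1 \<le> k \<Longrightarrow> comp C (d \<eta>) (Suc k) 0 = d21 (comp C \<eta> (k - 1) 1) + d10 (comp C \<eta> k 0)"
  by (simp add: comp_d)

lemma Mk_if_bottom_in_BN:
  assumes k: "1 \<le> k" and \<eta>: "\<eta> \<in> Ck C k" "piq C 1 (d \<eta>) = 0"
    and bottom: "d21 (comp C \<eta> (k - 1) 1) + d10 (comp C \<eta> k 0) \<in> BN C d d21 d01 0 (Suc k)"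
  shows "\<eta> \<in> Mk C d d21 d01 k"
proof -
  have "comp C (d \<eta>) i j \<in> BN C d d21 d01 j (Suc k)" if "i + j = Suc k" for i j
  proof (cases "j = 0")
    case True
    then show ?thesis using that bottom comp_d_bottom[OF k, of \<eta>] by simp
  next
    case False
    then show ?thesis using \<eta>(2) zero_BN by (simp add: piq_eq_0_iff)
  qed
  then show ?thesis unfolding Mk_def using \<eta>(1) by simp
qed

lemma comp_image_cocycles_below_2_eq_ker_varrho:
  assumes k: "1 \<le> k"
  shows "(\<lambda>z. comp C z (k - 1) 1) ` cocycles_below k 2 = ker_varrho C d d21 d10 d01 k"
proof (intro equalityI subsetI)
  fix \<xi> assume "\<xi> \<in> (\<lambda>z. comp C z (k - 1) 1) ` cocycles_below k 2"
  then obtain z where z: "z \<in> cocycles_below k (Suc 1)" and \<xi>: "\<xi> = comp C z (k - 1) 1"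
    by (auto simp: numeral_2_eq_2)
  have z_Ck: "z \<in> Ck C k" and z_d: "d z = 0" using z unfolding cocycles_below_def Zd_def by auto
  have \<xi>_piq: "piq C 1 z = \<xi>" using piq_cocycles_below[OF z k] \<xi> by simp
  have \<xi>C: "\<xi> \<in> C (k - 1) 1" using \<xi> comp_in_C by simp
  have "d21 (comp C \<xi> (k - 1) 1) + d10 (comp C z k 0) = comp C (d z) (Suc k) 0"
    using comp_d_bottom[OF k, of z] \<xi> comp_of_C[OF \<xi>C] by simp
  then have "d21 (comp C \<xi> (k - 1) 1) + d10 (comp C z k 0) \<in> BN C d d21 d01 0 (k + 1)"
    using z_d zero_BN by simp
  moreover have "\<xi> \<in> Jcal C d k"
    unfolding Jcal_def Acal_def using z_Ck z_d \<xi>_piq \<xi>C by auto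
  ultimately show "\<xi> \<in> ker_varrho C d d21 d10 d01 k"
    unfolding ker_varrho_def using z_Ck z_d \<xi>_piq by auto
next
  fix \<xi> assume "\<xi> \<in> ker_varrho C d d21 d10 d01 k"
  then obtain \<eta> where \<xi>C: "\<xi> \<in> C (k - 1) 1"
    and \<eta>: "\<eta> \<in> Ck C k" "piq C 1 \<eta> = \<xi>" "piq C 1 (d \<eta>) = 0"
    and bottom: "d21 (comp C \<xi> (k - 1) 1) + d10 (comp C \<eta> k 0) \<in> BN C d d21 d01 0 (k + 1)"
    unfolding ker_varrho_def Jcal_def by auto
  have \<xi>_comp: "comp C \<xi> (k - 1) 1 = comp C \<eta> (k - 1) 1"
    using \<eta>(2) by (auto simp: comp_piq)
  have "\<eta> \<in> Mk C d d21 d01 k"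
    using Mk_if_bottom_in_BN[OF k \<eta>(1,3)] bottom \<xi>_comp by simp
  then obtain z where z: "z \<in> Zd C d k" "\<And>i j. 1 \<le> j \<Longrightarrow> comp C z i j = comp C \<eta> i j"
    using Mk_cocycle_correction[OF _ \<eta>(3) k] by blast
  have "comp C \<eta> i j = 0" if "1 < j" for i j
    using comp_above_piq_in_C[of 1 \<eta>] \<eta>(2) \<xi>C that by blast
  then have "z \<in> cocycles_below k 2"
    using z unfolding cocycles_below_def by simp
  moreover have "\<xi> = comp C z (k - 1) 1"
    using z(2) \<xi>_comp comp_of_C[OF \<xi>C] by simp
  ultimately show "\<xi> \<in> (\<lambda>z. comp C z (k - 1) 1) ` cocycles_below k 2" by blast
qed

lemma Bcal_0: "Bcal C d k 0 = Bd C d k"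
  unfolding Bcal_def by (simp add: piq_0)

lemma piq_degree: "v \<in> Ck C k \<Longrightarrow> piq C k v = comp C v 0 k"
  using piq_Ck[of v k k] comp_Ck[of v k] by simp

lemma Zcal_degree_subset: "Zcal C d d21 d01 k k \<subseteq> C 0 k"
  unfolding Zcal_def Mk_def by (auto simp: piq_degree comp_in_C)

lemma Bcal_degree:
  assumes k: "1 \<le> k"
  shows "Bcal C d k k \<inter> C 0 k = B0 C d01 k"
proof -
  have top: "piq C k (d x) = d01 (comp C x 0 (k - 1))" if "d x \<in> Ck C k" for x
    using that k by (simp add: piq_degree comp_d)
  have "Bcal C d k k = B0 C d01 k"
  proof (intro equalityI subsetI)
    fix y assume "y \<in> Bcal C d k k"
    then obtain x where "y = piq C k (d x)" "d x \<in> Ck C k" unfolding Bcal_def Bd_def by auto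
    then show "y \<in> B0 C d01 k" using k top comp_in_C unfolding B0_def by auto
  next
    fix y assume "y \<in> B0 C d01 k"
    then obtain w where w: "w \<in> C 0 (k - 1)" "y = d01 w" using k unfolding B0_def by auto
    then have dw: "d w \<in> Ck C k" using d_Ck C_subset_Ck[of 0 "k - 1"] k by fastforce
    moreover have "y = piq C k (d w)" using top[OF dw] w comp_of_C[OF w(1)] by simp
    ultimately show "y \<in> Bcal C d k k" unfolding Bcal_def Bd_def by blast
  qed
  moreover have "B0 C d01 k \<subseteq> C 0 k" using k d01_C[of _ 0 "k - 1"] unfolding B0_def by auto
  ultimately show ?thesis by blast
qed

lemma quot_sum_iso_column_filtration:
  assumes S: "V.subspace S" and B: "V.subspace B"
  shows "quot_sum_iso sc (S \<inter> Zd C d k) (B \<inter> (S \<inter> Zd C d k))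
    (map (\<lambda>q. ((\<lambda>z. comp C z (k - q) q) ` (S \<inter> cocycles_below k (Suc q)),
               (\<lambda>z. comp C z (k - q) q) ` (B \<inter> (S \<inter> cocycles_below k (Suc q))))) [0..<Suc k])"
proof -
  have "quot_sum_iso sc (S \<inter> cocycles_below k (Suc k)) (B \<inter> (S \<inter> cocycles_below k (Suc k)))
    (map (\<lambda>q. ((\<lambda>z. comp C z (k - q) q) ` (S \<inter> cocycles_below k (Suc q)),
               (\<lambda>z. comp C z (k - q) q) ` (B \<inter> (S \<inter> cocycles_below k (Suc q))))) [0..<Suc k])"
  proof (rule V.quot_sum_iso_filtration)
    show "V.subspace (S \<inter> cocycles_below k q)" for q
      by (intro V.subspace_inter S cocycles_below_subspace)
    show "S \<inter> cocycles_below k 0 \<subseteq> B"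
      using B V.subspace_0 by (auto simp: cocycles_below_0)
    show "{x \<in> S \<inter> cocycles_below k (Suc q). comp C x (k - q) q = 0} = S \<inter> cocycles_below k q"
      if "q < Suc k" for q
      using cocycles_below_Suc[of q k] that by auto
  qed (use B linear_comp in \<open>auto simp del: upt_Suc\<close>)
  then show ?thesis by (simp add: cocycles_below_Suc_degree)
qed

lemma cocycle_pieces_degree_3:
  "(\<lambda>z. comp C z 3 0) ` cocycles_below 3 1 = ZN C d d21 d01 0 3"
  "(\<lambda>z. comp C z 2 1) ` cocycles_below 3 2 = ker_varrho C d d21 d10 d01 3"
  "(\<lambda>z. comp C z 1 2) ` cocycles_below 3 3 = Zcal C d d21 d01 3 2 \<inter> C 1 2"
  "(\<lambda>z. comp C z 0 3) ` cocycles_below 3 4 = Zcal C d d21 d01 3 3"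
  using comp_image_cocycles_below_1_eq_ZN[of 3] comp_image_cocycles_below_2_eq_ker_varrho[of 3]
    comp_image_cocycles_below_eq_Zcal[of 2 3] comp_image_cocycles_below_eq_Zcal[of 3 3] Zcal_degree_subset[of 3]
  by (auto simp: numeral_eq_Suc)

lemma boundary_pieces_degree_3:
  "(\<lambda>z. comp C z 3 0) ` (Bd C d 3 \<inter> cocycles_below 3 1) = Bd C d 3 \<inter> C 3 0"
  "(\<lambda>z. comp C z 2 1) ` (Bd C d 3 \<inter> cocycles_below 3 2) = Bcal C d 3 1 \<inter> C 2 1"
  "(\<lambda>z. comp C z 1 2) ` (Bd C d 3 \<inter> cocycles_below 3 3) = Bcal C d 3 2 \<inter> C 1 2"
  "(\<lambda>z. comp C z 0 3) ` (Bd C d 3 \<inter> cocycles_below 3 4) = B0 C d01 3"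
  using comp_image_boundaries_below_eq_Bcal[of 0 3] comp_image_boundaries_below_eq_Bcal[of 1 3]
    comp_image_boundaries_below_eq_Bcal[of 2 3] comp_image_boundaries_below_eq_Bcal[of 3 3] Bcal_0 Bcal_degree[of 3]
  by (auto simp: numeral_eq_Suc)

end

theorem corollary5p8:
  fixes sc :: "'r::field \<Rightarrow> 'v::ab_group_add \<Rightarrow> 'v"
    and C :: "nat \<Rightarrow> nat \<Rightarrow> 'v set"
    and d d21 d10 d01 :: "'v \<Rightarrow> 'v"
  assumes "bigraded_complex sc C d d21 d10 d01"
  shows "quot_sum_iso sc (Bd C d 3) {0}
           [(Bd C d 3 \<inter> C 3 0, {0}), (Bcal C d 3 1 \<inter> C 2 1, {0}),
            (Bcal C d 3 2 \<inter> C 1 2, {0}), (B0 C d01 3, {0})]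
       \<and> quot_sum_iso sc (Zd C d 3) {0}
           [(ZN C d d21 d01 0 3, {0}), (ker_varrho C d d21 d10 d01 3, {0}),
            (Zcal C d d21 d01 3 2 \<inter> C 1 2, {0}), (Zcal C d d21 d01 3 3, {0})]
       \<and> quot_sum_iso sc (Zd C d 3) (Bd C d 3)
           [(ZN C d d21 d01 0 3, Bd C d 3 \<inter> C 3 0),
            (ker_varrho C d d21 d10 d01 3, Bcal C d 3 1 \<inter> C 2 1),
            (Zcal C d d21 d01 3 2 \<inter> C 1 2, Bcal C d 3 2 \<inter> C 1 2),
            (Zcal C d d21 d01 3 3, B0 C d01 3)]"
proof -
  interpret bigraded_cochain_complex sc C d d21 d10 d01
    by (fact bigraded_cochain_complex.intro[OF assms])
  have upt: "[0..<4] = [0, 1, 2, 3 :: nat]"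
    by (simp add: upt_rec)
  have index_arith: "(3::nat) - 0 = 3" "(3::nat) - 1 = 2" "(3::nat) - 2 = 1" "(3::nat) - 3 = 0"
    "Suc 0 = 1" "Suc 1 = 2" "Suc 2 = 3" "Suc 3 = 4"
    by simp_all
  have zero: "{0} \<inter> Bd C d 3 = {0}" "{0} \<inter> Zd C d 3 = {0}" "{0} \<inter> cocycles_below 3 q = {0}"
    "{0} \<inter> (Bd C d 3 \<inter> cocycles_below 3 q) = {0}" "(\<lambda>z. comp C z i j) ` {0} = {0}" for q i j
    using V.subspace_0[OF Bd_subspace] V.subspace_0[OF cocycles_below_subspace]
      V.subspace_0[OF Zd_subspace] by auto
  have "Bd C d 3 \<inter> Zd C d 3 = Bd C d 3" using Bd_subset_Zd by blast
  then show ?thesis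
    using quot_sum_iso_column_filtration[OF Bd_subspace V.subspace_single_0, of 3 3]
      quot_sum_iso_column_filtration[OF V.subspace_UNIV V.subspace_single_0, of 3]
      quot_sum_iso_column_filtration[OF V.subspace_UNIV Bd_subspace, of 3 3]
    by (simp only: upt list.map index_arith zero Int_UNIV_left
      cocycle_pieces_degree_3 boundary_pieces_degree_3)
qed

end
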